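(* For fixed positive integers $x$ and $y$, the expected number of isolated vertices in the task-dependency graph generated by the $(x,y)$ edge-addition process on $n$ vertices is $o(1)$ as $n\to\infty$.
   Context: A task-dependency graph is a finite directed acyclic graph (no loops, no multiple edges). A vertex is initial if it has in-degree $0$ and terminal if it has out-degree $0$ (an isolated vertex is both). An $(x,y)$ task-dependency graph has exactly $x$ initial and exactly $y$ terminal vertices. The $(x,y)$ edge-addition process on $n$ vertices: start with the empty graph on $\{1,\dots,n\}$ and repeatedly add, uniformly at random, an edge $(a,b)$ with $a<b$ not yet present; if an addition would cause fewer than $x$ initial vertices or fewer than $y$ terminal vertices, it is cancelled. The process halts if the graph after some edge addition is an $(x,y)$ task-dependency graph, or if no more edges can be added; the result is the final graph. *)

theory Defs
  imports "HOL-Probability.Probability"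
begin

text \<open>A graph on the vertex set {1..n} is a set of directed edges (a,b) with a < b.\<close>

definition pairs :: "nat \<Rightarrow> (nat \<times> nat) set" where
  "pairs n = {(a, b). 1 \<le> a \<and> a < b \<and> b \<le> n}"

definition initial_vertices :: "nat \<Rightarrow> (nat \<times> nat) set \<Rightarrow> nat set" where
  "initial_vertices n G = {v \<in> {1..n}. \<not> (\<exists>u. (u, v) \<in> G)}"

definition terminal_vertices :: "nat \<Rightarrow> (nat \<times> nat) set \<Rightarrow> nat set" where
  "terminal_vertices n G = {v \<in> {1..n}. \<not> (\<exists>w. (v, w) \<in> G)}"

definition isolated_vertices :: "nat \<Rightarrow> (nat \<times> nat) set \<Rightarrow> nat set" where
  "isolated_vertices n G = initial_vertices n G \<inter> terminal_vertices n G"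

definition is_tdg :: "nat \<Rightarrow> nat \<Rightarrow> nat \<Rightarrow> (nat \<times> nat) set \<Rightarrow> bool" where
  "is_tdg n x y G \<longleftrightarrow> card (initial_vertices n G) = x \<and> card (terminal_vertices n G) = y"

text \<open>Edges whose addition would not be cancelled.\<close>
definition allowed :: "nat \<Rightarrow> nat \<Rightarrow> nat \<Rightarrow> (nat \<times> nat) set \<Rightarrow> (nat \<times> nat) set" where
  "allowed n x y G = {e \<in> pairs n - G.
      x \<le> card (initial_vertices n (insert e G)) \<and> y \<le> card (terminal_vertices n (insert e G))}"

text \<open>The process with a step budget k. Choosing uniformly among non-present edges and
  cancelling forbidden ones is the same as choosing uniformly among allowed edges.\<close>
fun run :: "nat \<Rightarrow> nat \<Rightarrow> nat \<Rightarrow> nat \<Rightarrow> (nat \<times> nat) set \<Rightarrow> (nat \<times> nat) set pmf" where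
  "run n x y 0 G = return_pmf G"
| "run n x y (Suc k) G =
     (if is_tdg n x y G \<or> allowed n x y G = {} then return_pmf G
      else pmf_of_set (allowed n x y G) \<bind> (\<lambda>e. run n x y k (insert e G)))"

text \<open>Each step adds a new edge from pairs n, so card (pairs n) steps suffice.\<close>
definition final_graph :: "nat \<Rightarrow> nat \<Rightarrow> nat \<Rightarrow> (nat \<times> nat) set pmf" where
  "final_graph n x y = run n x y (card (pairs n)) {}"

end

(*
  While the graph has more than x initial and more than y terminal vertices no addition is
  cancelled, so the next edge is uniform among the missing pairs; it destroys each isolated
  vertex with probability at least 2/n, hence in this regime the expected number of isolated
  vertices shrinks by the factor 1 - 2/n per step. The regime can only end after an edge enters
  one of the first k = max x y + 1 vertices or leaves one of the last k. At most 2 k^2 pairs do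
  so, so one of them is among the first m edges with probability at most 2 k^2 m / (N - m),
  where N = n (n - 1) / 2, and afterwards at most max x y vertices are isolated. Combining both
  estimates in one potential that decreases in expectation along the process gives the bound
  n (1 - 2/n)^m + max x y * 2 k^2 m / (N - m), and m = n * ceiling (ln n) makes it o(1).
*)
theory Submission
  imports Defs "HOL-Real_Asymp.Real_Asymp"
begin

lemma finite_pairs: "finite (pairs n)"
  by (rule finite_subset[of _ "{1..n} \<times> {1..n}"]) (auto simp: pairs_def)

lemma card_pairs: "2 * card (pairs n) = n * (n - 1)"
proof (induction n)
  case 0
  have "pairs 0 = {}" unfolding pairs_def by auto
  then show ?case by simp
next
  case (Suc n)
  have "pairs (Suc n) = pairs n \<union> (\<lambda>a. (a, Suc n)) ` {1..n}"
    unfolding pairs_def by auto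
  moreover have "pairs n \<inter> (\<lambda>a. (a, Suc n)) ` {1..n} = {}"
    unfolding pairs_def by auto
  ultimately have "card (pairs (Suc n)) = card (pairs n) + n"
    using finite_pairs by (simp add: card_Un_disjoint card_image inj_on_def)
  then show ?case using Suc.IH by (cases n) (auto simp: algebra_simps)
qed

lemma real_card_pairs: "real (card (pairs n)) = real n * (real n - 1) / 2"
  using arg_cong[OF card_pairs[of n], of real] by (cases n) (auto simp: algebra_simps)

lemma initial_vertices_insert:
  "initial_vertices n (insert (a, b) G) = initial_vertices n G - {b}"
  unfolding initial_vertices_def by auto

lemma terminal_vertices_insert:
  "terminal_vertices n (insert (a, b) G) = terminal_vertices n G - {a}"
  unfolding terminal_vertices_def by auto

lemma isolated_vertices_insert:
  "isolated_vertices n (insert (a, b) G) = isolated_vertices n G - {a, b}"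
  unfolding isolated_vertices_def initial_vertices_insert terminal_vertices_insert by auto

lemma isolated_vertices_antimono:
  "G \<subseteq> G' \<Longrightarrow> isolated_vertices n G' \<subseteq> isolated_vertices n G"
  unfolding isolated_vertices_def initial_vertices_def terminal_vertices_def by auto

lemma isolated_vertices_empty: "isolated_vertices n {} = {1..n}"
  unfolding isolated_vertices_def initial_vertices_def terminal_vertices_def by auto

lemma finite_initial_vertices: "finite (initial_vertices n G)"
  unfolding initial_vertices_def by simp

lemma finite_terminal_vertices: "finite (terminal_vertices n G)"
  unfolding terminal_vertices_def by simp

lemma finite_isolated_vertices: "finite (isolated_vertices n G)"
  unfolding isolated_vertices_def by (simp add: finite_initial_vertices)

lemma card_isolated_vertices_le:
  "card (isolated_vertices n G) \<le> min (card (initial_vertices n G)) (card (terminal_vertices n G))"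
  unfolding isolated_vertices_def
  by (simp add: card_mono finite_initial_vertices finite_terminal_vertices)

lemma set_pmf_run: "set_pmf (run n x y k G) \<subseteq> {G'. G \<subseteq> G' \<and> G' \<subseteq> G \<union> pairs n}"
proof (induction k arbitrary: G)
  case 0
  then show ?case by simp
next
  case (Suc k)
  have "allowed n x y G \<subseteq> pairs n - G" "finite (allowed n x y G)"
    unfolding allowed_def using finite_pairs by auto
  then show ?case
    using Suc.IH by (auto simp: set_bind_pmf) blast+
qed

definition unconstrained :: "nat \<Rightarrow> nat \<Rightarrow> nat \<Rightarrow> (nat \<times> nat) set \<Rightarrow> bool" where
  "unconstrained n x y G \<longleftrightarrow> x < card (initial_vertices n G) \<and> y < card (terminal_vertices n G)"

lemma unconstrained_allowed:
  assumes "unconstrained n x y G"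
  shows "allowed n x y G = pairs n - G"
proof -
  have "x \<le> card (initial_vertices n (insert e G)) \<and> y \<le> card (terminal_vertices n (insert e G))" for e
  proof -
    obtain a b where e: "e = (a, b)" by force
    have "card (initial_vertices n G) - 1 \<le> card (initial_vertices n G - {b})"
      "card (terminal_vertices n G) - 1 \<le> card (terminal_vertices n G - {a})"
      using diff_card_le_card_Diff[of "{b}" "initial_vertices n G"]
        diff_card_le_card_Diff[of "{a}" "terminal_vertices n G"] by simp_all
    then show ?thesis
      using assms unfolding e initial_vertices_insert terminal_vertices_insert unconstrained_def
      by linarith
  qed
  then show ?thesis unfolding allowed_def by auto
qed

lemma unconstrained_not_complete:
  assumes "0 < x" "unconstrained n x y G"
  shows "pairs n - G \<noteq> {}"
proof
  assume "pairs n - G = {}"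
  then have "(1, v) \<in> G" if "1 < v" "v \<le> n" for v
    using that unfolding pairs_def by auto
  then have "initial_vertices n G \<subseteq> {1}"
    unfolding initial_vertices_def by (auto simp: le_eq_less_or_eq)
  then have "card (initial_vertices n G) \<le> 1"
    using card_mono[of "{1::nat}"] by fastforce
  then show False using assms unfolding unconstrained_def by simp
qed

lemma run_Suc_unconstrained:
  assumes "0 < x" "unconstrained n x y G"
  shows "run n x y (Suc k) G = pmf_of_set (pairs n - G) \<bind> (\<lambda>e. run n x y k (insert e G))"
proof -
  have "\<not> is_tdg n x y G"
    using assms(2) unfolding is_tdg_def unconstrained_def by auto
  then show ?thesis
    using unconstrained_allowed[OF assms(2)] unconstrained_not_complete[OF assms] by simp
qed

lemma finite_set_pmf_run:
  assumes "G \<subseteq> pairs n"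
  shows "finite (set_pmf (run n x y k G))"
proof (rule finite_subset)
  show "set_pmf (run n x y k G) \<subseteq> Pow (pairs n)"
    using set_pmf_run[of n x y k G] assms by blast
qed (simp add: finite_pairs)

lemma expectation_run_le_antimono:
  fixes F :: "(nat \<times> nat) set \<Rightarrow> real"
  assumes "G \<subseteq> pairs n" and "\<And>G'. G \<subseteq> G' \<Longrightarrow> G' \<subseteq> pairs n \<Longrightarrow> F G' \<le> F G"
  shows "measure_pmf.expectation (run n x y k G) F \<le> F G"
proof (rule measure_pmf.integral_le_const)
  show "integrable (measure_pmf (run n x y k G)) F"
    using finite_set_pmf_run[OF assms(1)] by (rule integrable_measure_pmf_finite)
  show "AE G' in measure_pmf (run n x y k G). F G' \<le> F G"
    unfolding AE_measure_pmf_iff using assms set_pmf_run[of n x y k G] by blast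
qed

lemma expectation_run_le_potential:
  fixes F \<Phi> :: "(nat \<times> nat) set \<Rightarrow> real"
  assumes "0 < x"
    and F_antimono: "\<And>G G'. G \<subseteq> G' \<Longrightarrow> G' \<subseteq> pairs n \<Longrightarrow> F G' \<le> F G"
    and potential: "\<And>G. G \<subseteq> pairs n \<Longrightarrow> F G \<le> \<Phi> G \<or> unconstrained n x y G \<and>
          (\<Sum>e\<in>pairs n - G. \<Phi> (insert e G)) \<le> real (card (pairs n - G)) * \<Phi> G"
  shows "G \<subseteq> pairs n \<Longrightarrow> card (pairs n) \<le> k + card G \<Longrightarrow>
    measure_pmf.expectation (run n x y k G) F \<le> \<Phi> G"
proof (induction k arbitrary: G)
  case 0
  then have "G = pairs n"
    using card_seteq[OF finite_pairs] by simp
  then have "\<not> unconstrained n x y G"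
    using unconstrained_not_complete[OF \<open>0 < x\<close>] by blast
  then have "F G \<le> \<Phi> G"
    using potential[OF 0(1)] by blast
  moreover have "measure_pmf.expectation (run n x y 0 G) F \<le> F G"
    using 0(1) F_antimono by (rule expectation_run_le_antimono)
  ultimately show ?case by linarith
next
  case (Suc k)
  from potential[OF Suc.prems(1)] show ?case
  proof (elim disjE conjE)
    assume "F G \<le> \<Phi> G"
    moreover have "measure_pmf.expectation (run n x y (Suc k) G) F \<le> F G"
      using Suc.prems(1) F_antimono by (rule expectation_run_le_antimono)
    ultimately show ?thesis by linarith
  next
    assume unc: "unconstrained n x y G"
      and sum: "(\<Sum>e\<in>pairs n - G. \<Phi> (insert e G)) \<le> real (card (pairs n - G)) * \<Phi> G"
    let ?A = "pairs n - G"
    have A: "?A \<noteq> {}" "finite ?A"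
      using unconstrained_not_complete[OF \<open>0 < x\<close> unc] finite_pairs by auto
    have "finite G"
      using Suc.prems(1) finite_pairs finite_subset by blast
    have IH: "measure_pmf.expectation (run n x y k (insert e G)) F \<le> \<Phi> (insert e G)"
      if "e \<in> ?A" for e
      using that Suc.prems \<open>finite G\<close> by (intro Suc.IH) auto
    have "measure_pmf.expectation (run n x y (Suc k) G) F
        = (\<Sum>e\<in>?A. measure_pmf.expectation (run n x y k (insert e G)) F / real (card ?A))"
      unfolding run_Suc_unconstrained[OF \<open>0 < x\<close> unc] using A Suc.prems(1)
      by (subst pmf_expectation_bind_pmf_of_set) (auto simp: finite_set_pmf_run divide_inverse_commute)
    also have "\<dots> \<le> (\<Sum>e\<in>?A. \<Phi> (insert e G) / real (card ?A))"
      by (intro sum_mono divide_right_mono IH) simp_all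
    also have "\<dots> = (\<Sum>e\<in>?A. \<Phi> (insert e G)) / real (card ?A)"
      by (simp add: sum_divide_distrib)
    also have "\<dots> \<le> \<Phi> G"
      using sum A by (simp add: divide_le_eq card_gt_0_iff mult.commute)
    finally show ?thesis .
  qed
qed

definition incident_pairs :: "nat \<Rightarrow> nat \<Rightarrow> (nat \<times> nat) set" where
  "incident_pairs n v = {e \<in> pairs n. fst e = v \<or> snd e = v}"

lemma card_incident_pairs:
  assumes "v \<in> {1..n}"
  shows "card (incident_pairs n v) = n - 1"
proof -
  have "incident_pairs n v = (\<lambda>a. (a, v)) ` {1..<v} \<union> (\<lambda>b. (v, b)) ` {v<..n}"
    using assms unfolding incident_pairs_def pairs_def by auto
  moreover have "(\<lambda>a. (a, v)) ` {1..<v} \<inter> (\<lambda>b. (v, b)) ` {v<..n} = {}"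
    by auto
  ultimately have "card (incident_pairs n v) = (v - 1) + (n - v)"
    by (simp add: card_Un_disjoint card_image inj_on_def)
  then show ?thesis
    using assms by auto
qed

lemma sum_card_isolated_vertices_insert:
  assumes "G \<subseteq> pairs n"
  shows "(\<Sum>e\<in>pairs n - G. real (card (isolated_vertices n (insert e G))))
       = real (card (isolated_vertices n G)) * (real (card (pairs n - G)) - real (n - 1))"
proof -
  let ?A = "pairs n - G" and ?I = "isolated_vertices n G"
  let ?avoids = "\<lambda>e v. if e \<notin> incident_pairs n v then 1 else 0 :: real"
  have "finite ?A"
    using finite_pairs by simp
  have count_vertices: "real (card (isolated_vertices n (insert e G))) = (\<Sum>v\<in>?I. ?avoids e v)"
    if "e \<in> ?A" for e
  proof -
    obtain a b where e: "e = (a, b)" by force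
    have "isolated_vertices n (insert e G) = {v \<in> ?I. e \<notin> incident_pairs n v}"
      using that unfolding e isolated_vertices_insert incident_pairs_def by auto
    then show ?thesis
      using finite_isolated_vertices[of n G] by (simp add: sum.If_cases Int_def)
  qed
  have count_edges: "(\<Sum>e\<in>?A. ?avoids e v) = real (card ?A) - real (n - 1)"
    if v: "v \<in> ?I" for v
  proof -
    have incident: "incident_pairs n v \<subseteq> ?A"
      using v assms unfolding incident_pairs_def isolated_vertices_def initial_vertices_def
        terminal_vertices_def by force
    have "v \<in> {1..n}"
      using v unfolding isolated_vertices_def initial_vertices_def by auto
    then have "card (incident_pairs n v) = n - 1"
      by (rule card_incident_pairs)
    moreover have "card (incident_pairs n v) \<le> card ?A"
      using \<open>finite ?A\<close> incident by (rule card_mono)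
    moreover have "(\<Sum>e\<in>?A. ?avoids e v) = real (card (?A - incident_pairs n v))"
      using \<open>finite ?A\<close> by (simp add: sum.If_cases Diff_eq Compl_eq)
    ultimately show ?thesis
      using incident \<open>finite ?A\<close> by (simp add: card_Diff_subset finite_subset of_nat_diff)
  qed
  have "(\<Sum>e\<in>?A. real (card (isolated_vertices n (insert e G)))) = (\<Sum>e\<in>?A. \<Sum>v\<in>?I. ?avoids e v)"
    using count_vertices by (rule sum.cong[OF refl])
  also have "\<dots> = (\<Sum>v\<in>?I. \<Sum>e\<in>?A. ?avoids e v)"
    by (rule sum.swap)
  also have "\<dots> = (\<Sum>v\<in>?I. real (card ?A) - real (n - 1))"
    using count_edges by (rule sum.cong[OF refl])
  finally show ?thesis
    by simp
qed

lemma sum_card_isolated_vertices_insert_le: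
  assumes "G \<subseteq> pairs n"
  shows "(\<Sum>e\<in>pairs n - G. real (card (isolated_vertices n (insert e G))))
       \<le> (1 - 2 / real n) * real (card (pairs n - G)) * real (card (isolated_vertices n G))"
proof -
  let ?a = "real (card (pairs n - G))"
  have "?a * (2 / real n) \<le> real (n - 1)"
  proof (cases "n = 0")
    case False
    have "real (card (pairs n)) * (2 / real n) = real (n - 1)"
      using False by (simp add: real_card_pairs of_nat_diff)
    moreover have "?a \<le> real (card (pairs n))"
      using finite_pairs by (simp add: card_mono)
    ultimately show ?thesis
      using mult_right_mono[of ?a "real (card (pairs n))" "2 / real n"] by simp
  qed simp
  then have "?a - real (n - 1) \<le> (1 - 2 / real n) * ?a"
    by (simp add: algebra_simps)
  then show ?thesis
    unfolding sum_card_isolated_vertices_insert[OF assms]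
    by (simp add: mult_left_mono mult.commute mult.left_commute)
qed

definition decay_potential :: "nat \<Rightarrow> nat \<Rightarrow> (nat \<times> nat) set \<Rightarrow> real" where
  "decay_potential n m G = real (card (isolated_vertices n G)) * (1 - 2 / real n) ^ (m - card G)"

lemma sum_decay_potential_insert_le:
  assumes "G \<subseteq> pairs n" and "2 \<le> n"
  shows "(\<Sum>e\<in>pairs n - G. decay_potential n m (insert e G))
       \<le> real (card (pairs n - G)) * decay_potential n m G"
proof -
  let ?\<rho> = "1 - 2 / real n" and ?c = "card G"
  have "finite G"
    using assms(1) finite_pairs finite_subset by blast
  have \<rho>: "0 \<le> ?\<rho>" "?\<rho> \<le> 1"
    using assms(2) by (simp_all add: field_simps)
  have power_step: "?\<rho> * ?\<rho> ^ (m - Suc ?c) \<le> ?\<rho> ^ (m - ?c)"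
    using \<rho> by (cases "?c < m") (simp_all add: Suc_diff_Suc flip: power_Suc)
  have "(\<Sum>e\<in>pairs n - G. decay_potential n m (insert e G))
      = ?\<rho> ^ (m - Suc ?c) * (\<Sum>e\<in>pairs n - G. real (card (isolated_vertices n (insert e G))))"
    unfolding decay_potential_def sum_distrib_left using \<open>finite G\<close>
    by (intro sum.cong) auto
  also have "\<dots> \<le> ?\<rho> ^ (m - Suc ?c) * (?\<rho> * real (card (pairs n - G)) * real (card (isolated_vertices n G)))"
    using sum_card_isolated_vertices_insert_le[OF assms(1)] \<rho> by (simp add: mult_left_mono)
  also have "\<dots> \<le> real (card (pairs n - G)) * decay_potential n m G"
    unfolding decay_potential_def using power_step
    by (simp add: mult_left_mono mult.commute mult.left_commute)
  finally show ?thesis .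
qed

definition boundary_edge :: "nat \<Rightarrow> nat \<Rightarrow> nat \<times> nat \<Rightarrow> bool" where
  "boundary_edge n k e \<longleftrightarrow> snd e \<le> k \<or> n < fst e + k"

lemma card_boundary_edges: "card {e \<in> pairs n. boundary_edge n k e} \<le> 2 * k^2"
proof -
  have "{e \<in> pairs n. boundary_edge n k e} \<subseteq> {1..k} \<times> {1..k} \<union> {n+1-k..n} \<times> {n+1-k..n}"
    unfolding pairs_def boundary_edge_def by auto
  then have "card {e \<in> pairs n. boundary_edge n k e}
      \<le> card ({1..k} \<times> {1..k} \<union> {n+1-k..n} \<times> {n+1-k..n})"
    by (intro card_mono) simp_all
  also have "\<dots> \<le> card ({1..k} \<times> {1..k}) + card ({n+1-k..n} \<times> {n+1-k..n})"
    by (rule card_Un_le)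
  also have "\<dots> \<le> 2 * k^2"
    by (simp add: card_cartesian_product power2_eq_square mult_le_mono)
  finally show ?thesis .
qed

lemma no_boundary_edge_card_initial_terminal:
  assumes "k \<le> n" and "\<forall>e\<in>G. \<not> boundary_edge n k e"
  shows "k \<le> card (initial_vertices n G) \<and> k \<le> card (terminal_vertices n G)"
proof
  have "(u, v) \<notin> G" if "v \<le> k" for u v
    using assms(2) that unfolding boundary_edge_def by fastforce
  then have "{1..k} \<subseteq> initial_vertices n G"
    using assms(1) unfolding initial_vertices_def by auto
  then have "card {1..k} \<le> card (initial_vertices n G)"
    by (rule card_mono[OF finite_initial_vertices])
  then show "k \<le> card (initial_vertices n G)"
    by simp
next
  have "(v, w) \<notin> G" if "n < v + k" for v w
    using assms(2) that unfolding boundary_edge_def by fastforce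
  then have "{n+1-k..n} \<subseteq> terminal_vertices n G"
    using assms(1) unfolding terminal_vertices_def by auto
  then have "card {n+1-k..n} \<le> card (terminal_vertices n G)"
    by (rule card_mono[OF finite_terminal_vertices])
  then show "k \<le> card (terminal_vertices n G)"
    using assms(1) by simp
qed

text \<open>Each of the remaining m - card G steps before time m picks a boundary edge with
  probability at most 2 k^2 / (card (pairs n) - m).\<close>
definition boundary_potential :: "nat \<Rightarrow> nat \<Rightarrow> nat \<Rightarrow> (nat \<times> nat) set \<Rightarrow> real" where
  "boundary_potential n k m G =
     (if \<exists>e\<in>G. boundary_edge n k e then 1
      else real (2 * k^2) * real (m - card G) / real (card (pairs n) - m))"

lemma boundary_potential_nonneg: "0 \<le> boundary_potential n k m G"
  unfolding boundary_potential_def by simp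

lemma sum_boundary_potential_insert_le:
  assumes "G \<subseteq> pairs n" and "card G < m" and "m < card (pairs n)"
  shows "(\<Sum>e\<in>pairs n - G. boundary_potential n k m (insert e G))
       \<le> real (card (pairs n - G)) * boundary_potential n k m G"
proof (cases "\<exists>e\<in>G. boundary_edge n k e")
  case True
  then show ?thesis
    unfolding boundary_potential_def by simp
next
  case False
  let ?A = "pairs n - G" and ?M = "real (2 * k^2)" and ?D = "real (card (pairs n) - m)"
  let ?a = "real (card ?A)" and ?c = "card G"
  have "finite G" "finite ?A"
    using assms(1) finite_pairs finite_subset by auto
  have "0 < ?D"
    using assms(3) by simp
  have "?D \<le> ?a"
    using assms \<open>finite G\<close> by (simp add: card_Diff_subset)
  have pointwise: "boundary_potential n k m (insert e G)
      \<le> (if boundary_edge n k e then 1 else 0) + ?M * real (m - Suc ?c) / ?D" if "e \<in> ?A" for e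
    using that False \<open>finite G\<close> unfolding boundary_potential_def by auto
  have "card {e \<in> ?A. boundary_edge n k e} \<le> card {e \<in> pairs n. boundary_edge n k e}"
    using finite_pairs by (intro card_mono) auto
  then have "real (card {e \<in> ?A. boundary_edge n k e}) \<le> ?M"
    using card_boundary_edges[of n k] by linarith
  also have "\<dots> = ?D * ?M / ?D"
    using \<open>0 < ?D\<close> by simp
  also have "\<dots> \<le> ?a * ?M / ?D"
    using \<open>?D \<le> ?a\<close> by (intro divide_right_mono mult_right_mono) simp_all
  finally have boundary_count: "real (card {e \<in> ?A. boundary_edge n k e}) \<le> ?a * ?M / ?D" .
  have "(\<Sum>e\<in>?A. boundary_potential n k m (insert e G))
      \<le> (\<Sum>e\<in>?A. (if boundary_edge n k e then 1 else 0) + ?M * real (m - Suc ?c) / ?D)"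
    using pointwise by (rule sum_mono)
  also have "\<dots> = real (card {e \<in> ?A. boundary_edge n k e}) + ?a * (?M * real (m - Suc ?c) / ?D)"
    using \<open>finite ?A\<close> by (simp add: sum.distrib sum.If_cases Int_def conj_commute)
  also have "\<dots> \<le> ?a * ?M / ?D + ?a * (?M * real (m - Suc ?c) / ?D)"
    using boundary_count by simp
  also have "\<dots> = ?a * (?M * real (Suc (m - Suc ?c)) / ?D)"
    by (simp add: add_divide_distrib ring_distribs)
  also have "\<dots> = ?a * (?M * real (m - ?c) / ?D)"
    using assms(2) by (simp only: Suc_diff_Suc)
  finally show ?thesis
    using False unfolding boundary_potential_def by simp
qed

lemma expectation_isolated_final_graph_le:
  assumes "0 < x" and "0 < y" and "max x y < n" and "m < card (pairs n)"
  shows "measure_pmf.expectation (final_graph n x y) (\<lambda>G. real (card (isolated_vertices n G)))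
    \<le> real n * (1 - 2 / real n) ^ m
       + real (max x y) * (real (2 * (max x y + 1)^2) * real m / real (card (pairs n) - m))"
proof -
  let ?F = "\<lambda>G. real (card (isolated_vertices n G))"
  define K where "K = max x y"
  define \<Phi> where "\<Phi> G = decay_potential n m G + K * boundary_potential n (K + 1) m G" for G
  have "2 \<le> n"
    using assms(1,3) by linarith
  have antimono: "?F G' \<le> ?F G" if "G \<subseteq> G'" "G' \<subseteq> pairs n" for G G'
    using isolated_vertices_antimono[OF that(1)] by (simp add: card_mono finite_isolated_vertices)
  have potential: "?F G \<le> \<Phi> G \<or> unconstrained n x y G \<and>
      (\<Sum>e\<in>pairs n - G. \<Phi> (insert e G)) \<le> real (card (pairs n - G)) * \<Phi> G"
    if G: "G \<subseteq> pairs n" for G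
  proof -
    have "0 \<le> decay_potential n m G" "0 \<le> K * boundary_potential n (K + 1) m G"
      using \<open>2 \<le> n\<close> boundary_potential_nonneg by (simp_all add: decay_potential_def)
    consider "m \<le> card G" | "\<not> unconstrained n x y G" | "card G < m" "unconstrained n x y G"
      by linarith
    then show ?thesis
    proof cases
      case 1
      then have "?F G \<le> decay_potential n m G"
        unfolding decay_potential_def by simp
      then show ?thesis
        using \<open>0 \<le> K * boundary_potential n (K + 1) m G\<close> unfolding \<Phi>_def by linarith
    next
      case 2
      then have "\<exists>e\<in>G. boundary_edge n (K + 1) e"
        using no_boundary_edge_card_initial_terminal[of "K + 1" n G] assms(3)
        unfolding unconstrained_def K_def by fastforce
      then have "boundary_potential n (K + 1) m G = 1"
        unfolding boundary_potential_def by simp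
      moreover have "?F G \<le> K"
        using 2 card_isolated_vertices_le[of n G] unfolding unconstrained_def K_def by linarith
      ultimately show ?thesis
        using \<open>0 \<le> decay_potential n m G\<close> unfolding \<Phi>_def by simp
    next
      case 3
      have "(\<Sum>e\<in>pairs n - G. \<Phi> (insert e G))
          = (\<Sum>e\<in>pairs n - G. decay_potential n m (insert e G))
            + K * (\<Sum>e\<in>pairs n - G. boundary_potential n (K + 1) m (insert e G))"
        unfolding \<Phi>_def by (simp add: sum.distrib sum_distrib_left)
      also have "\<dots> \<le> real (card (pairs n - G)) * decay_potential n m G
            + K * (real (card (pairs n - G)) * boundary_potential n (K + 1) m G)"
        using sum_decay_potential_insert_le[OF G \<open>2 \<le> n\<close>]
          sum_boundary_potential_insert_le[OF G 3(1) assms(4)]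
        by (intro add_mono mult_left_mono) simp_all
      also have "\<dots> = real (card (pairs n - G)) * \<Phi> G"
        unfolding \<Phi>_def by (simp add: algebra_simps)
      finally show ?thesis
        using 3(2) by blast
    qed
  qed
  have "measure_pmf.expectation (run n x y (card (pairs n)) {}) ?F \<le> \<Phi> {}"
    using expectation_run_le_potential[OF assms(1) antimono potential] by simp
  then show ?thesis
    unfolding final_graph_def \<Phi>_def decay_potential_def boundary_potential_def K_def
    by (simp add: isolated_vertices_empty)
qed

lemma power_one_minus_le_inverse:
  assumes "2 \<le> n"
  shows "real n * (1 - 2 / real n) ^ (n * nat \<lceil>ln (real n)\<rceil>) \<le> 1 / real n"
proof -
  have "0 < real n"
    using assms by simp
  have "(1 - 2 / real n) ^ (n * nat \<lceil>ln (real n)\<rceil>) \<le> exp (- 2 / real n) ^ (n * nat \<lceil>ln (real n)\<rceil>)"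
    using assms exp_ge_add_one_self[of "- 2 / real n"] by (intro power_mono) (simp_all add: field_simps)
  also have "\<dots> = exp (- 2 * real (nat \<lceil>ln (real n)\<rceil>))"
    using \<open>0 < real n\<close> by (simp add: power_mult flip: exp_of_nat_mult)
  also have "\<dots> \<le> exp (- 2 * ln (real n))"
    using assms by simp
  also have "\<dots> = inverse (exp (ln (real n)) * exp (ln (real n)))"
    by (simp flip: exp_add exp_minus)
  also have "\<dots> = 1 / real n ^ 2"
    using \<open>0 < real n\<close> by (simp add: power2_eq_square divide_inverse)
  finally show ?thesis
    using \<open>0 < real n\<close> by (simp add: field_simps power2_eq_square)
qed

lemma expectation_isolated_final_graph_le_log:
  assumes "0 < x" and "0 < y" and "max x y < n"
    and D: "0 < real n * (real n - 1) / 2 - real n * (ln (real n) + 1)"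
  shows "measure_pmf.expectation (final_graph n x y) (\<lambda>G. real (card (isolated_vertices n G)))
    \<le> 1 / real n + real (max x y) * real (2 * (max x y + 1)^2) * (real n * (ln (real n) + 1))
         / (real n * (real n - 1) / 2 - real n * (ln (real n) + 1))"
proof -
  define m where "m = n * nat \<lceil>ln (real n)\<rceil>"
  define C where "C = real (max x y) * real (2 * (max x y + 1)^2)"
  let ?D = "real n * (real n - 1) / 2 - real n * (ln (real n) + 1)"
  have "2 \<le> n"
    using assms(1,3) by linarith
  then have "0 \<le> ln (real n)"
    by simp
  then have m_le: "real m \<le> real n * (ln (real n) + 1)"
    unfolding m_def by (simp add: mult_left_mono)
  then have "?D \<le> real (card (pairs n)) - real m"
    unfolding real_card_pairs by simp
  then have "m < card (pairs n)" and D_le: "?D \<le> real (card (pairs n) - m)"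
    using D by (simp_all add: of_nat_diff)
  have "real (max x y) * (real (2 * (max x y + 1)^2) * real m / real (card (pairs n) - m))
      = C * real m / real (card (pairs n) - m)"
    unfolding C_def by simp
  also have "\<dots> \<le> C * (real n * (ln (real n) + 1)) / real (card (pairs n) - m)"
    unfolding C_def using m_le by (intro divide_right_mono mult_left_mono) simp_all
  also have "\<dots> \<le> C * (real n * (ln (real n) + 1)) / ?D"
    unfolding C_def using D D_le \<open>0 \<le> ln (real n)\<close> by (intro divide_left_mono) simp_all
  finally show ?thesis
    using expectation_isolated_final_graph_le[OF assms(1-3) \<open>m < card (pairs n)\<close>]
      power_one_minus_le_inverse[OF \<open>2 \<le> n\<close>]
    unfolding m_def C_def by linarith
qed

theorem mainTheorem17:
  fixes x y :: nat
  assumes "0 < x" and "0 < y"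
  shows "(\<lambda>n. measure_pmf.expectation (final_graph n x y)
            (\<lambda>G. real (card (isolated_vertices n G)))) \<longlonglongrightarrow> 0"
proof (rule tendsto_sandwich)
  show "eventually (\<lambda>n. 0 \<le> measure_pmf.expectation (final_graph n x y)
      (\<lambda>G. real (card (isolated_vertices n G)))) sequentially"
    by (simp add: integral_nonneg_AE)
  define C where "C = real (max x y) * real (2 * (max x y + 1)^2)"
  let ?D = "\<lambda>n. real n * (real n - 1) / 2 - real n * (ln (real n) + 1)"
  have "eventually (\<lambda>n. 0 < ?D n) sequentially" "eventually (\<lambda>n. real (max x y) < real n) sequentially"
    by real_asymp+
  then show "eventually (\<lambda>n. measure_pmf.expectation (final_graph n x y)
      (\<lambda>G. real (card (isolated_vertices n G))) \<le> 1 / real n + C * (real n * (ln (real n) + 1)) / ?D n)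
      sequentially"
    by eventually_elim (use expectation_isolated_final_graph_le_log[OF assms] in \<open>simp add: C_def\<close>)
  show "(\<lambda>n. 1 / real n + C * (real n * (ln (real n) + 1)) / ?D n) \<longlonglongrightarrow> 0"
    by real_asymp
qed simp

end
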